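(* Let $(\mathbb{P},\le,f)$ be a forcing property for $\mathcal{L}_A$, $G$ a generic set and $\varphi\in\mathcal{L}_A^s(C)$. Then $\varphi^G=\inf_{p\in G}F^w_p(\varphi)$.
   Context: $\mathcal{L}$ is a countable continuous signature; formulas of $\mathcal{L}_{\omega_1,\omega}$ are built from atomic formulas using $\neg$, $\tfrac12$, $\dotplus$, countable conjunctions $\bigwedge$ and $\inf_x$. $\mathcal{L}_A$ is a countable fragment, $C=\{c_i:i<\omega\}$ new constants, $\mathcal{L}_A(C)$ the smallest countable fragment of $\mathcal{L}_{\omega_1,\omega}(C)$ containing $\mathcal{L}_A$, $\mathcal{L}_A^s(C)$ its sentences, $\mathcal{L}_A^{as}(C)$ its atomic sentences, $\mathcal{T}(C)$ closed terms. A forcing property $(\mathbb{P},\le,f)$: poset with $f_p\colon\mathcal{L}_A^{as}(C)\to[0,1]$ such that (1) $p\le q\Rightarrow f_p\le f_q$; (2) for every $p$, $\varepsilon>0$, $\tau,\sigma\in\mathcal{T}(C)$, atomic $\varphi(x)$ there are $q\le p$, $c\in C$ with $f_q(d(\tau,c))<\varepsilon$, $f_q(d(\tau,\sigma))<f_p(d(\sigma,\tau))+\varepsilon$, and if $f_p(d(\tau,\sigma))<\delta_{\varphi,x}(\varepsilon)$ then $f_q(\varphi(\sigma))<f_p(\varphi(\tau))+\varepsilon$. $F_p$: $f_p$ on atomics; $F_p(\neg\varphi)=1-\inf_{q\le p}F_q(\varphi)$; $F_p(\tfrac12\varphi)=\tfrac12F_p(\varphi)$; $F_p(\varphi\dotplus\psi)=\min(F_p(\varphi)+F_p(\psi),1)$;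 $F_p(\bigwedge\Phi)=\inf_{\varphi\in\Phi}F_p(\varphi)$; $F_p(\inf_x\varphi)=\inf_{c\in C}F_p(\varphi(c))$. Weak forcing: $F^w_p(\varphi)=\sup_{q\le p}\inf_{q'\le q}F_{q'}(\varphi)$. $G\subseteq\mathbb{P}$ is generic if nonempty, downward directed, upward closed, and for every sentence $\varphi$ and $r>1$ some $p\in G$ has $F_p(\varphi)+F_p(\neg\varphi)<r$. $\varphi^G:=\inf_{p\in G}F_p(\varphi)$. *)

theory Defs
  imports Complex_Main "HOL-Library.Countable_Set"
begin

text \<open>Terms: variables, the new constants c_i (CC i), and function symbols of the
signature applied to argument lists (constants of the signature are 0-ary symbols).\<close>
datatype 'f trm = Var nat | CC nat | Fn 'f "'f trm list"

text \<open>Formulas: atomic (relation symbols and the metric d), negation, 1/2, truncated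
sum, countable conjunction (indexed by nat), and inf over a variable.\<close>
datatype ('f, 'r) fm =
    Rel 'r "'f trm list"
  | Dist "'f trm" "'f trm"
  | Neg "('f, 'r) fm"
  | Half "('f, 'r) fm"
  | Plus "('f, 'r) fm" "('f, 'r) fm"
  | Conj "nat \<Rightarrow> ('f, 'r) fm"
  | Inf_q nat "('f, 'r) fm"

fun tfv :: "'f trm \<Rightarrow> nat set" where
  "tfv (Var v) = {v}"
| "tfv (CC i) = {}"
| "tfv (Fn g ts) = (\<Union>t\<in>set ts. tfv t)"

fun tsubst :: "(nat \<Rightarrow> 'f trm) \<Rightarrow> 'f trm \<Rightarrow> 'f trm" where
  "tsubst s (Var v) = s v"
| "tsubst s (CC i) = CC i"
| "tsubst s (Fn g ts) = Fn g (map (tsubst s) ts)"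

text \<open>Well-formed terms; the flag says whether the new constants C may occur.\<close>
fun twf :: "('f \<Rightarrow> nat) \<Rightarrow> bool \<Rightarrow> 'f trm \<Rightarrow> bool" where
  "twf ar b (Var v) = True"
| "twf ar b (CC i) = b"
| "twf ar b (Fn g ts) = (length ts = ar g \<and> (\<forall>t\<in>set ts. twf ar b t))"

primrec ffv :: "('f, 'r) fm \<Rightarrow> nat set" where
  "ffv (Rel r ts) = (\<Union>t\<in>set ts. tfv t)"
| "ffv (Dist a b) = tfv a \<union> tfv b"
| "ffv (Neg \<phi>) = ffv \<phi>"
| "ffv (Half \<phi>) = ffv \<phi>"
| "ffv (Plus \<phi> \<psi>) = ffv \<phi> \<union> ffv \<psi>"
| "ffv (Conj \<Phi>) = (\<Union>n. ffv (\<Phi> n))"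
| "ffv (Inf_q x \<phi>) = ffv \<phi> - {x}"

primrec fbv :: "('f, 'r) fm \<Rightarrow> nat set" where
  "fbv (Rel r ts) = {}"
| "fbv (Dist a b) = {}"
| "fbv (Neg \<phi>) = fbv \<phi>"
| "fbv (Half \<phi>) = fbv \<phi>"
| "fbv (Plus \<phi> \<psi>) = fbv \<phi> \<union> fbv \<psi>"
| "fbv (Conj \<Phi>) = (\<Union>n. fbv (\<Phi> n))"
| "fbv (Inf_q x \<phi>) = insert x (fbv \<phi>)"

primrec fsubst :: "(nat \<Rightarrow> 'f trm) \<Rightarrow> ('f, 'r) fm \<Rightarrow> ('f, 'r) fm" where
  "fsubst s (Rel r ts) = Rel r (map (tsubst s) ts)"
| "fsubst s (Dist a b) = Dist (tsubst s a) (tsubst s b)"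
| "fsubst s (Neg \<phi>) = Neg (fsubst s \<phi>)"
| "fsubst s (Half \<phi>) = Half (fsubst s \<phi>)"
| "fsubst s (Plus \<phi> \<psi>) = Plus (fsubst s \<phi>) (fsubst s \<psi>)"
| "fsubst s (Conj \<Phi>) = Conj (\<lambda>n. fsubst s (\<Phi> n))"
| "fsubst s (Inf_q x \<phi>) = Inf_q x (fsubst (s(x := Var x)) \<phi>)"

text \<open>Well-formed formulas of L_{omega_1,omega} (b = True: of L(C)); as usual in
L_{omega_1,omega}, every formula has only finitely many free variables.\<close>
primrec fwf :: "('f \<Rightarrow> nat) \<Rightarrow> ('r \<Rightarrow> nat) \<Rightarrow> bool \<Rightarrow> ('f, 'r) fm \<Rightarrow> bool" where
  "fwf far rar b (Rel r ts) = (length ts = rar r \<and> (\<forall>t\<in>set ts. twf far b t))"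
| "fwf far rar b (Dist s t) = (twf far b s \<and> twf far b t)"
| "fwf far rar b (Neg \<phi>) = fwf far rar b \<phi>"
| "fwf far rar b (Half \<phi>) = fwf far rar b \<phi>"
| "fwf far rar b (Plus \<phi> \<psi>) = (fwf far rar b \<phi> \<and> fwf far rar b \<psi>)"
| "fwf far rar b (Conj \<Phi>) = ((\<forall>n. fwf far rar b (\<Phi> n)) \<and> finite (\<Union>n. ffv (\<Phi> n)))"
| "fwf far rar b (Inf_q x \<phi>) = fwf far rar b \<phi>"

definition is_atomic :: "('f, 'r) fm \<Rightarrow> bool" where
  "is_atomic \<phi> \<longleftrightarrow> (\<exists>r ts. \<phi> = Rel r ts) \<or> (\<exists>s t. \<phi> = Dist s t)"

definition is_fragment :: "('f \<Rightarrow> nat) \<Rightarrow> ('r \<Rightarrow> nat) \<Rightarrow> bool \<Rightarrow> ('f, 'r) fm set \<Rightarrow> bool" where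
  "is_fragment far rar b S \<longleftrightarrow>
     S \<subseteq> {\<phi>. fwf far rar b \<phi>} \<and>
     (\<forall>\<phi>. fwf far rar b \<phi> \<and> is_atomic \<phi> \<longrightarrow> \<phi> \<in> S) \<and>
     (\<forall>\<phi>. Neg \<phi> \<in> S \<longrightarrow> \<phi> \<in> S) \<and>
     (\<forall>\<phi>. Half \<phi> \<in> S \<longrightarrow> \<phi> \<in> S) \<and>
     (\<forall>\<phi> \<psi>. Plus \<phi> \<psi> \<in> S \<longrightarrow> \<phi> \<in> S \<and> \<psi> \<in> S) \<and>
     (\<forall>\<Phi> n. Conj \<Phi> \<in> S \<longrightarrow> \<Phi> n \<in> S) \<and>
     (\<forall>x \<phi>. Inf_q x \<phi> \<in> S \<longrightarrow> \<phi> \<in> S) \<and>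
     (\<forall>\<phi>\<in>S. Neg \<phi> \<in> S \<and> Half \<phi> \<in> S \<and> (\<forall>x. Inf_q x \<phi> \<in> S)) \<and>
     (\<forall>\<phi>\<in>S. \<forall>\<psi>\<in>S. Plus \<phi> \<psi> \<in> S) \<and>
     (\<forall>\<phi>\<in>S. \<forall>x t. twf far b t \<and> tfv t \<inter> fbv \<phi> = {} \<longrightarrow> fsubst (Var(x := t)) \<phi> \<in> S)"

definition LAC :: "('f \<Rightarrow> nat) \<Rightarrow> ('r \<Rightarrow> nat) \<Rightarrow> ('f, 'r) fm set \<Rightarrow> ('f, 'r) fm set" where
  "LAC far rar LA = \<Inter>{S. is_fragment far rar True S \<and> countable S \<and> LA \<subseteq> S}"

definition LAs :: "('f \<Rightarrow> nat) \<Rightarrow> ('r \<Rightarrow> nat) \<Rightarrow> ('f, 'r) fm set \<Rightarrow> ('f, 'r) fm set" where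
  "LAs far rar LA = {\<phi> \<in> LAC far rar LA. ffv \<phi> = {}}"

definition LAas :: "('f \<Rightarrow> nat) \<Rightarrow> ('r \<Rightarrow> nat) \<Rightarrow> ('f, 'r) fm set \<Rightarrow> ('f, 'r) fm set" where
  "LAas far rar LA = {\<phi> \<in> LAs far rar LA. is_atomic \<phi>}"

definition closed_terms :: "('f \<Rightarrow> nat) \<Rightarrow> 'f trm set" where
  "closed_terms far = {t. twf far True t \<and> tfv t = {}}"

text \<open>delta \<phi> x is the modulus of uniform continuity delta_{\<phi>,x} of the atomic
formula \<phi> in the variable x (taken as a parameter).  The poset is the type 'p with
its order.\<close>
definition forcing_property ::
  "('f \<Rightarrow> nat) \<Rightarrow> ('r \<Rightarrow> nat) \<Rightarrow> (('f, 'r) fm \<Rightarrow> nat \<Rightarrow> real \<Rightarrow> real) \<Rightarrow> ('f, 'r) fm set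
    \<Rightarrow> ('p::order \<Rightarrow> ('f, 'r) fm \<Rightarrow> real) \<Rightarrow> bool" where
  "forcing_property far rar delta LA f \<longleftrightarrow>
     (\<forall>p. \<forall>\<phi>\<in>LAas far rar LA. 0 \<le> f p \<phi> \<and> f p \<phi> \<le> 1) \<and>
     (\<forall>p q. p \<le> q \<longrightarrow> (\<forall>\<phi>\<in>LAas far rar LA. f p \<phi> \<le> f q \<phi>)) \<and>
     (\<forall>p \<epsilon> \<tau> \<sigma> \<phi> x. \<epsilon> > 0 \<and> \<tau> \<in> closed_terms far \<and> \<sigma> \<in> closed_terms far \<and>
        fwf far rar True \<phi> \<and> is_atomic \<phi> \<and> ffv \<phi> \<subseteq> {x} \<longrightarrow>
        (\<exists>q c. q \<le> p \<and> f q (Dist \<tau> (CC c)) < \<epsilon> \<and>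
           f q (Dist \<tau> \<sigma>) < f p (Dist \<sigma> \<tau>) + \<epsilon> \<and>
           (f p (Dist \<tau> \<sigma>) < delta \<phi> x \<epsilon> \<longrightarrow>
              f q (fsubst (Var(x := \<sigma>)) \<phi>) < f p (fsubst (Var(x := \<tau>)) \<phi>) + \<epsilon>)))"

text \<open>Fo f \<phi> e p is F_p applied to \<phi> with its free variables
replaced according to e (e = Var is the identity); F_p(\<phi>) = Fo f \<phi> Var p for a
sentence \<phi>.  The environment makes the clause inf_x \<phi> = inf_c F_p(\<phi>(c))
structurally recursive.\<close>
primrec Fo :: "('p::order \<Rightarrow> ('f, 'r) fm \<Rightarrow> real) \<Rightarrow> ('f, 'r) fm \<Rightarrow> (nat \<Rightarrow> 'f trm) \<Rightarrow> 'p \<Rightarrow> real" where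
  "Fo f (Rel r ts) e p = f p (fsubst e (Rel r ts))"
| "Fo f (Dist s t) e p = f p (fsubst e (Dist s t))"
| "Fo f (Neg \<phi>) e p = 1 - (INF q\<in>{q. q \<le> p}. Fo f \<phi> e q)"
| "Fo f (Half \<phi>) e p = Fo f \<phi> e p / 2"
| "Fo f (Plus \<phi> \<psi>) e p = min (Fo f \<phi> e p + Fo f \<psi> e p) 1"
| "Fo f (Conj \<Phi>) e p = (INF n. Fo f (\<Phi> n) e p)"
| "Fo f (Inf_q x \<phi>) e p = (INF c. Fo f \<phi> (e(x := CC c)) p)"

definition Fp :: "('p::order \<Rightarrow> ('f, 'r) fm \<Rightarrow> real) \<Rightarrow> 'p \<Rightarrow> ('f, 'r) fm \<Rightarrow> real" where
  "Fp f p \<phi> = Fo f \<phi> Var p"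

definition Fw :: "('p::order \<Rightarrow> ('f, 'r) fm \<Rightarrow> real) \<Rightarrow> 'p \<Rightarrow> ('f, 'r) fm \<Rightarrow> real" where
  "Fw f p \<phi> = (SUP q\<in>{q. q \<le> p}. INF q'\<in>{q'. q' \<le> q}. Fp f q' \<phi>)"

definition generic ::
  "('f \<Rightarrow> nat) \<Rightarrow> ('r \<Rightarrow> nat) \<Rightarrow> ('f, 'r) fm set \<Rightarrow> ('p::order \<Rightarrow> ('f, 'r) fm \<Rightarrow> real) \<Rightarrow> 'p set \<Rightarrow> bool" where
  "generic far rar LA f G \<longleftrightarrow>
     G \<noteq> {} \<and>
     (\<forall>p\<in>G. \<forall>q\<in>G. \<exists>r\<in>G. r \<le> p \<and> r \<le> q) \<and>
     (\<forall>p\<in>G. \<forall>q. p \<le> q \<longrightarrow> q \<in> G) \<and>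
     (\<forall>\<phi>\<in>LAs far rar LA. \<forall>r::real. r > 1 \<longrightarrow> (\<exists>p\<in>G. Fp f p \<phi> + Fp f p (Neg \<phi>) < r))"

definition gval :: "('p::order \<Rightarrow> ('f, 'r) fm \<Rightarrow> real) \<Rightarrow> 'p set \<Rightarrow> ('f, 'r) fm \<Rightarrow> real" where
  "gval f G \<phi> = (INF p\<in>G. Fp f p \<phi>)"

end

theory Submission
  imports Defs
begin

text \<open>Every forcing value F_p(\<psi>) of a sentence lies in [0,1] and is monotone in p, so
  F^w_p(\<psi>) \<le> F_p(\<psi>) and the inequality \<phi>^G \<ge> inf_{p\<in>G} F^w_p(\<phi>) is immediate.
  Conversely, F_p(\<not>\<phi>) = 1 - inf_{q\<le>p} F_q(\<phi>), so genericity provides p0 \<in> G with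
  F_{p0}(\<phi>) < inf_{q\<le>p0} F_q(\<phi>) + \<epsilon>; this gap can only shrink when p0 is replaced by a
  common extension p1 \<in> G of p0 and any given p \<in> G, and inf_{q\<le>p1} F_q(\<phi>) \<le> F^w_p(\<phi>).\<close>

lemma LAC_closed_under:
  assumes "a \<in> LAC far rar LA" "\<And>S. is_fragment far rar True S \<Longrightarrow> a \<in> S \<Longrightarrow> b \<in> S"
  shows "b \<in> LAC far rar LA"
  using assms unfolding LAC_def by blast

lemma fragment_subformulas:
  assumes "is_fragment far rar b S"
  shows "(\<forall>\<phi>. Neg \<phi> \<in> S \<longrightarrow> \<phi> \<in> S) \<and> (\<forall>\<phi>. Half \<phi> \<in> S \<longrightarrow> \<phi> \<in> S) \<and>
    (\<forall>\<phi> \<psi>. Plus \<phi> \<psi> \<in> S \<longrightarrow> \<phi> \<in> S \<and> \<psi> \<in> S) \<and> (\<forall>\<Phi> n. Conj \<Phi> \<in> S \<longrightarrow> \<Phi> n \<in> S) \<and>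
    (\<forall>x \<phi>. Inf_q x \<phi> \<in> S \<longrightarrow> \<phi> \<in> S)"
  using assms unfolding is_fragment_def by (elim conjE) (intro conjI; assumption)

lemma fragment_subst_const:
  assumes "is_fragment far rar True S" "\<phi> \<in> S"
  shows "fsubst (Var(x := CC c)) \<phi> \<in> S"
proof -
  have "\<forall>\<phi>\<in>S. \<forall>x t. twf far True t \<and> tfv t \<inter> fbv \<phi> = {} \<longrightarrow> fsubst (Var(x := t)) \<phi> \<in> S"
    using assms(1) unfolding is_fragment_def by (elim conjE)
  then show ?thesis using assms(2) by simp
qed

lemma LAC_subformulas:
  shows LAC_NegD: "Neg \<phi> \<in> LAC far rar LA \<Longrightarrow> \<phi> \<in> LAC far rar LA"
    and LAC_HalfD: "Half \<phi> \<in> LAC far rar LA \<Longrightarrow> \<phi> \<in> LAC far rar LA"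
    and LAC_PlusD1: "Plus \<phi> \<psi> \<in> LAC far rar LA \<Longrightarrow> \<phi> \<in> LAC far rar LA"
    and LAC_PlusD2: "Plus \<phi> \<psi> \<in> LAC far rar LA \<Longrightarrow> \<psi> \<in> LAC far rar LA"
    and LAC_ConjD: "Conj \<Phi> \<in> LAC far rar LA \<Longrightarrow> \<Phi> n \<in> LAC far rar LA"
    and LAC_Inf_qD: "Inf_q x \<phi> \<in> LAC far rar LA \<Longrightarrow> \<phi> \<in> LAC far rar LA"
  by (erule LAC_closed_under, use fragment_subformulas in blast)+

lemma LAC_subst_const:
  "\<phi> \<in> LAC far rar LA \<Longrightarrow> fsubst (Var(x := CC c)) \<phi> \<in> LAC far rar LA"
  by (erule LAC_closed_under) (rule fragment_subst_const)

lemma tsubst_id: "(\<And>v. v \<in> tfv u \<Longrightarrow> s v = Var v) \<Longrightarrow> tsubst s u = u"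
  by (induction u) (auto intro: map_idI)

lemma tfv_tsubst: "tfv (tsubst s u) = (\<Union>v\<in>tfv u. tfv (s v))"
  by (induction u) auto

lemma fsubst_Var: "fsubst Var \<psi> = \<psi>"
  by (induction \<psi>) (auto simp: tsubst_id intro: map_idI)

lemma tsubst_fun_upd_closed:
  assumes "\<And>v. e v = Var v \<or> tfv (e v) = {}" "tfv t = {}"
  shows "tsubst (Var(x := t)) (tsubst (e(x := Var x)) u) = tsubst (e(x := t)) u"
  using assms
proof (induction u)
  case (Var v)
  consider "v = x" | "e v = Var v" | "tfv (e v) = {}"
    using Var.prems(1) by blast
  then show ?case
    by cases (auto intro!: tsubst_id)
qed auto

lemma fsubst_fun_upd_closed:
  assumes "\<And>v. e v = Var v \<or> tfv (e v) = {}" "tfv t = {}"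
  shows "fsubst (Var(x := t)) (fsubst (e(x := Var x)) \<psi>) = fsubst (e(x := t)) \<psi>"
  using assms
proof (induction \<psi> arbitrary: e)
  case (Inf_q y \<psi>)
  show ?case
  proof (cases "y = x")
    case True
    have "(Var(x := t))(x := Var x) = Var" "(e(x := t))(x := Var x) = (e(x := Var x))(x := Var x)"
      by (rule ext, simp)+
    then show ?thesis unfolding True fsubst.simps by (simp only: fsubst_Var)
  next
    case False
    have closed: "\<And>v. (e(y := Var y)) v = Var v \<or> tfv ((e(y := Var y)) v) = {}"
      using Inf_q.prems(1) by auto
    have "(Var(x := t))(y := Var y) = Var(x := t)" by (rule ext) (simp add: False[symmetric])
    moreover have "(e(x := Var x))(y := Var y) = (e(y := Var y))(x := Var x)"
      using False by (simp add: fun_upd_twist)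
    moreover have "(e(y := Var y))(x := t) = (e(x := t))(y := Var y)"
      using False by (simp add: fun_upd_twist)
    ultimately show ?thesis
      using Inf_q.IH[OF closed Inf_q.prems(2)] by (simp only: fsubst.simps)
  qed
qed (auto simp: tsubst_fun_upd_closed)

lemma fsubst_atomic_in_LAas:
  assumes "fsubst e \<psi> \<in> LAC far rar LA" "\<forall>v\<in>ffv \<psi>. tfv (e v) = {}" "is_atomic \<psi>"
  shows "fsubst e \<psi> \<in> LAas far rar LA"
  using assms unfolding LAas_def LAs_def is_atomic_def by (auto simp: tfv_tsubst)

lemma INF_in_unit_interval:
  fixes g :: "'a \<Rightarrow> real"
  assumes "A \<noteq> {}" "g ` A \<subseteq> {0..1}"
  shows "(INF x\<in>A. g x) \<in> {0..1}"
proof -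
  obtain a where "a \<in> A" using assms(1) by blast
  moreover have "bdd_below (g ` A)" using assms(2) by (intro bdd_belowI[where m=0]) auto
  ultimately have "(INF x\<in>A. g x) \<le> g a" by (rule cINF_lower[rotated])
  moreover have "0 \<le> (INF x\<in>A. g x)" using assms by (intro cINF_greatest) auto
  ultimately show ?thesis using assms(2) \<open>a \<in> A\<close> by auto
qed

lemma mono_INF:
  fixes g :: "'i \<Rightarrow> 'p::order \<Rightarrow> real"
  assumes "I \<noteq> {}" "\<And>i. i \<in> I \<Longrightarrow> mono (g i)" "\<And>i q. i \<in> I \<Longrightarrow> 0 \<le> g i q"
  shows "mono (\<lambda>q. INF i\<in>I. g i q)"
proof (rule monoI)
  fix p q :: 'p
  assume "p \<le> q"
  have "g i p \<le> g i q" if "i \<in> I" for i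
    using assms(2)[OF that] \<open>p \<le> q\<close> by (rule monoD)
  moreover have "bdd_below ((\<lambda>i. g i p) ` I)"
    using assms(3) by (intro bdd_belowI[where m=0]) auto
  ultimately show "(INF i\<in>I. g i p) \<le> (INF i\<in>I. g i q)"
    by (intro cINF_mono[OF assms(1)]) auto
qed

definition inf_below :: "('p::order \<Rightarrow> real) \<Rightarrow> 'p \<Rightarrow> real" where
  "inf_below g p = (INF q\<in>{q. q \<le> p}. g q)"

lemma inf_below_in_unit_interval: "range g \<subseteq> {0..1} \<Longrightarrow> inf_below g p \<in> {0..1}"
  unfolding inf_below_def by (rule INF_in_unit_interval) auto

lemma inf_below_le: "(\<And>q. 0 \<le> g q) \<Longrightarrow> inf_below g p \<le> g p"
  unfolding inf_below_def by (rule cINF_lower) (auto intro: bdd_belowI[where m=0])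

lemma antimono_inf_below: "(\<And>q. 0 \<le> g q) \<Longrightarrow> antimono (inf_below g)"
  unfolding inf_below_def
  by (intro antimonoI cINF_mono) (auto intro: bdd_belowI[where m=0] order_trans)

lemma SUP_inf_below_le:
  assumes "\<And>q. 0 \<le> g q" "mono g"
  shows "(SUP q\<in>{q. q \<le> p}. inf_below g q) \<le> g p"
  using assms by (intro cSUP_least) (auto intro: order_trans[OF inf_below_le] dest: monoD)

lemma inf_below_le_SUP:
  assumes "range g \<subseteq> {0..1}" "q \<le> p"
  shows "inf_below g q \<le> (SUP q\<in>{q. q \<le> p}. inf_below g q)"
proof (rule cSUP_upper)
  show "bdd_above (inf_below g ` {q. q \<le> p})"
    using inf_below_in_unit_interval[OF assms(1)] by (auto intro: bdd_aboveI[where M=1])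
qed (use assms(2) in simp)

definition unit_mono :: "('p::order \<Rightarrow> real) \<Rightarrow> bool" where
  "unit_mono g \<longleftrightarrow> range g \<subseteq> {0..1} \<and> mono g"

lemma unit_mono_bounds: "unit_mono g \<Longrightarrow> 0 \<le> g p \<and> g p \<le> 1"
  unfolding unit_mono_def by (auto simp: image_subset_iff)

lemma unit_mono_nonneg: "unit_mono g \<Longrightarrow> 0 \<le> g p"
  by (simp add: unit_mono_bounds)

lemma unit_mono_neg:
  assumes "unit_mono g"
  shows "unit_mono (\<lambda>p. 1 - inf_below g p)"
proof -
  have "antimono (inf_below g)"
    using unit_mono_nonneg[OF assms] by (rule antimono_inf_below)
  moreover have "inf_below g p \<in> {0..1}" for p
    using assms unfolding unit_mono_def by (blast intro: inf_below_in_unit_interval)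
  ultimately show ?thesis
    by (auto simp: unit_mono_def intro!: monoI dest: antimonoD)
qed

lemma unit_mono_half:
  assumes "unit_mono g"
  shows "unit_mono (\<lambda>p. g p / 2)"
proof -
  have "g p / 2 \<in> {0..1}" for p using unit_mono_bounds[OF assms, of p] by simp
  then show ?thesis using assms by (auto simp: unit_mono_def mono_def)
qed

lemma unit_mono_truncated_add:
  assumes "unit_mono g" "unit_mono h"
  shows "unit_mono (\<lambda>p. min (g p + h p) 1)"
proof -
  have "g p + h p \<le> g q + h q" if "p \<le> q" for p q
    using assms that by (intro add_mono) (auto simp: unit_mono_def dest: monoD)
  then have "mono (\<lambda>p. min (g p + h p) 1)" unfolding mono_def by (blast intro: min.mono)
  moreover have "0 \<le> g p + h p" for p using assms by (simp add: unit_mono_nonneg)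
  ultimately show ?thesis unfolding unit_mono_def by auto
qed

lemma unit_mono_INF:
  assumes "I \<noteq> {}" "\<And>i. i \<in> I \<Longrightarrow> unit_mono (g i)"
  shows "unit_mono (\<lambda>p. INF i\<in>I. g i p)"
  unfolding unit_mono_def
proof
  show "range (\<lambda>p. INF i\<in>I. g i p) \<subseteq> {0..1}"
    using assms by (auto simp: unit_mono_def intro!: INF_in_unit_interval)
  show "mono (\<lambda>p. INF i\<in>I. g i p)"
    using assms by (intro mono_INF) (auto simp: unit_mono_def unit_mono_nonneg)
qed

text \<open>The abstract core of the theorem, with g p standing for F_p(\<phi>); the last hypothesis
  is genericity, since F_p(\<not>\<phi>) = 1 - inf_below g p.\<close>

lemma INF_eq_INF_SUP_inf_below:
  fixes g :: "'p::order \<Rightarrow> real"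
  assumes "unit_mono g" and "G \<noteq> {}"
    and directed: "\<And>p q. p \<in> G \<Longrightarrow> q \<in> G \<Longrightarrow> \<exists>r\<in>G. r \<le> p \<and> r \<le> q"
    and decided: "\<And>\<epsilon>. 0 < \<epsilon> \<Longrightarrow> \<exists>p\<in>G. g p - inf_below g p < \<epsilon>"
  shows "(INF p\<in>G. g p) = (INF p\<in>G. SUP q\<in>{q. q \<le> p}. inf_below g q)"
proof (rule antisym)
  have unit: "range g \<subseteq> {0..1}" and "mono g" using \<open>unit_mono g\<close> by (simp_all add: unit_mono_def)
  have nonneg: "\<And>q. 0 \<le> g q" using \<open>unit_mono g\<close> by (rule unit_mono_nonneg)
  have bdd: "bdd_below (g ` G)" using nonneg by (auto intro: bdd_belowI[where m=0])
  show "(INF p\<in>G. g p) \<le> (INF p\<in>G. SUP q\<in>{q. q \<le> p}. inf_below g q)"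
  proof (rule cINF_greatest[OF \<open>G \<noteq> {}\<close>], rule field_le_epsilon)
    fix p :: 'p and \<epsilon> :: real
    assume "p \<in> G" "0 < \<epsilon>"
    obtain p\<^sub>0 where "p\<^sub>0 \<in> G" and gap: "g p\<^sub>0 - inf_below g p\<^sub>0 < \<epsilon>"
      using decided[OF \<open>0 < \<epsilon>\<close>] by blast
    obtain p\<^sub>1 where "p\<^sub>1 \<in> G" "p\<^sub>1 \<le> p" "p\<^sub>1 \<le> p\<^sub>0"
      using directed[OF \<open>p \<in> G\<close> \<open>p\<^sub>0 \<in> G\<close>] by blast
    have "g p\<^sub>1 \<le> g p\<^sub>0" using \<open>mono g\<close> \<open>p\<^sub>1 \<le> p\<^sub>0\<close> by (rule monoD)
    moreover have "inf_below g p\<^sub>0 \<le> inf_below g p\<^sub>1"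
      using antimono_inf_below[OF nonneg] \<open>p\<^sub>1 \<le> p\<^sub>0\<close> by (rule antimonoD)
    moreover have "(INF p\<in>G. g p) \<le> g p\<^sub>1" using bdd \<open>p\<^sub>1 \<in> G\<close> by (rule cINF_lower)
    moreover have "inf_below g p\<^sub>1 \<le> (SUP q\<in>{q. q \<le> p}. inf_below g q)"
      using unit \<open>p\<^sub>1 \<le> p\<close> by (rule inf_below_le_SUP)
    ultimately show "(INF p\<in>G. g p) \<le> (SUP q\<in>{q. q \<le> p}. inf_below g q) + \<epsilon>"
      using gap by linarith
  qed
  have "0 \<le> (SUP q\<in>{q. q \<le> p}. inf_below g q)" for p
    using inf_below_in_unit_interval[OF unit, of p] inf_below_le_SUP[OF unit order_refl, of p]
    by auto
  then have "bdd_below ((\<lambda>p. SUP q\<in>{q. q \<le> p}. inf_below g q) ` G)"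
    by (intro bdd_belowI[where m=0]) auto
  then show "(INF p\<in>G. SUP q\<in>{q. q \<le> p}. inf_below g q) \<le> (INF p\<in>G. g p)"
    using SUP_inf_below_le[OF nonneg \<open>mono g\<close>] by (intro cINF_mono[OF \<open>G \<noteq> {}\<close>]) auto
qed

text \<open>The hypotheses on the environment e make every atomic instance met in the recursion an
  atomic sentence of L_A(C), where f is [0,1]-valued and monotone.\<close>

lemma Fo_unit_mono:
  fixes f :: "'p::order \<Rightarrow> ('f, 'r) fm \<Rightarrow> real"
  assumes f_unit: "\<forall>p. \<forall>\<phi>\<in>LAas far rar LA. 0 \<le> f p \<phi> \<and> f p \<phi> \<le> 1"
    and f_mono: "\<forall>p q. p \<le> q \<longrightarrow> (\<forall>\<phi>\<in>LAas far rar LA. f p \<phi> \<le> f q \<phi>)"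
  shows "fsubst e \<psi> \<in> LAC far rar LA \<Longrightarrow> \<forall>v. e v = Var v \<or> tfv (e v) = {} \<Longrightarrow>
    \<forall>v\<in>ffv \<psi>. tfv (e v) = {} \<Longrightarrow> unit_mono (Fo f \<psi> e)"
proof (induction \<psi> arbitrary: e)
  case (Rel r ts)
  then have "fsubst e (Rel r ts) \<in> LAas far rar LA"
    by (intro fsubst_atomic_in_LAas) (auto simp: is_atomic_def)
  then show ?case using f_unit f_mono by (auto simp: unit_mono_def intro: monoI)
next
  case (Dist s t)
  then have "fsubst e (Dist s t) \<in> LAas far rar LA"
    by (intro fsubst_atomic_in_LAas) (auto simp: is_atomic_def)
  then show ?case using f_unit f_mono by (auto simp: unit_mono_def intro: monoI)
next
  case (Neg \<psi>)
  have "fsubst e \<psi> \<in> LAC far rar LA" using Neg.prems(1) by (auto dest: LAC_NegD)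
  then have "unit_mono (Fo f \<psi> e)" using Neg.IH Neg.prems(2,3) by simp
  moreover have "Fo f (Neg \<psi>) e = (\<lambda>p. 1 - inf_below (Fo f \<psi> e) p)"
    by (simp add: fun_eq_iff inf_below_def)
  ultimately show ?case by (simp add: unit_mono_neg)
next
  case (Half \<psi>)
  have "fsubst e \<psi> \<in> LAC far rar LA" using Half.prems(1) by (auto dest: LAC_HalfD)
  then have "unit_mono (Fo f \<psi> e)" using Half.IH Half.prems(2,3) by simp
  moreover have "Fo f (Half \<psi>) e = (\<lambda>p. Fo f \<psi> e p / 2)" by (simp add: fun_eq_iff)
  ultimately show ?case by (simp add: unit_mono_half)
next
  case (Plus \<psi>\<^sub>1 \<psi>\<^sub>2)
  have "fsubst e \<psi>\<^sub>1 \<in> LAC far rar LA" "fsubst e \<psi>\<^sub>2 \<in> LAC far rar LA"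
    using Plus.prems(1) by (auto dest: LAC_PlusD1 LAC_PlusD2)
  then have "unit_mono (Fo f \<psi>\<^sub>1 e)" "unit_mono (Fo f \<psi>\<^sub>2 e)"
    using Plus.IH Plus.prems(2,3) by simp_all
  moreover have "Fo f (Plus \<psi>\<^sub>1 \<psi>\<^sub>2) e = (\<lambda>p. min (Fo f \<psi>\<^sub>1 e p + Fo f \<psi>\<^sub>2 e p) 1)"
    by (simp add: fun_eq_iff)
  ultimately show ?case by (simp add: unit_mono_truncated_add)
next
  case (Conj \<Phi>)
  have "fsubst e (\<Phi> n) \<in> LAC far rar LA" for n
    using Conj.prems(1) by (auto dest: LAC_ConjD[where \<Phi> = "\<lambda>n. fsubst e (\<Phi> n)"])
  then have "unit_mono (Fo f (\<Phi> n) e)" for n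
    using Conj.IH Conj.prems(2,3) by auto
  moreover have "Fo f (Conj \<Phi>) e = (\<lambda>p. INF n. Fo f (\<Phi> n) e p)" by (simp add: fun_eq_iff)
  ultimately show ?case by (simp add: unit_mono_INF)
next
  case (Inf_q x \<psi>)
  have "fsubst (Var(x := CC c)) (fsubst (e(x := Var x)) \<psi>) \<in> LAC far rar LA" for c
    using Inf_q.prems(1) by (auto intro: LAC_subst_const dest: LAC_Inf_qD)
  then have "fsubst (e(x := CC c)) \<psi> \<in> LAC far rar LA" for c
    by (simp add: fsubst_fun_upd_closed Inf_q.prems(2))
  then have "unit_mono (Fo f \<psi> (e(x := CC c)))" for c
    by (rule Inf_q.IH) (use Inf_q.prems(2,3) in auto)
  moreover have "Fo f (Inf_q x \<psi>) e = (\<lambda>p. INF c. Fo f \<psi> (e(x := CC c)) p)"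
    by (simp add: fun_eq_iff)
  ultimately show ?case by (simp add: unit_mono_INF)
qed

theorem lemma2p13:
  fixes far :: "'f \<Rightarrow> nat" and rar :: "'r \<Rightarrow> nat"
    and delta :: "('f, 'r) fm \<Rightarrow> nat \<Rightarrow> real \<Rightarrow> real"
    and LA :: "('f, 'r) fm set"
    and f :: "'p::order \<Rightarrow> ('f, 'r) fm \<Rightarrow> real"
    and G :: "'p set" and \<phi> :: "('f, 'r) fm"
  assumes "countable (UNIV :: 'f set)" and "countable (UNIV :: 'r set)"
    and "is_fragment far rar False LA" and "countable LA"
    and "forcing_property far rar delta LA f"
    and "generic far rar LA f G"
    and "\<phi> \<in> LAs far rar LA"
  shows "gval f G \<phi> = (INF p\<in>G. Fw f p \<phi>)"
proof -
  define g where "g = (\<lambda>p. Fp f p \<phi>)"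
  have "\<phi> \<in> LAC far rar LA" "ffv \<phi> = {}" using assms(7) unfolding LAs_def by auto
  moreover have f_unit: "\<forall>p. \<forall>\<phi>\<in>LAas far rar LA. 0 \<le> f p \<phi> \<and> f p \<phi> \<le> 1"
    and f_mono: "\<forall>p q. p \<le> q \<longrightarrow> (\<forall>\<phi>\<in>LAas far rar LA. f p \<phi> \<le> f q \<phi>)"
    using assms(5) unfolding forcing_property_def by simp_all
  ultimately have "unit_mono g"
    using Fo_unit_mono[OF f_unit f_mono, of Var \<phi>] by (simp add: g_def Fp_def fsubst_Var)
  moreover have "G \<noteq> {}" and "\<forall>p\<in>G. \<forall>q\<in>G. \<exists>r\<in>G. r \<le> p \<and> r \<le> q"
    and generic: "\<forall>\<phi>\<in>LAs far rar LA. \<forall>r::real. r > 1 \<longrightarrow> (\<exists>p\<in>G. Fp f p \<phi> + Fp f p (Neg \<phi>) < r)"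
    using assms(6) unfolding generic_def by simp_all
  moreover have "\<exists>p\<in>G. g p - inf_below g p < \<epsilon>" if "0 < \<epsilon>" for \<epsilon>
  proof -
    obtain p where "p \<in> G" "Fp f p \<phi> + Fp f p (Neg \<phi>) < 1 + \<epsilon>"
      using generic assms(7) \<open>0 < \<epsilon>\<close> by force
    moreover have "Fp f p (Neg \<phi>) = 1 - inf_below g p"
      by (simp add: Fp_def g_def inf_below_def)
    ultimately show ?thesis by (auto simp: g_def)
  qed
  ultimately have "(INF p\<in>G. g p) = (INF p\<in>G. SUP q\<in>{q. q \<le> p}. inf_below g q)"
    by (intro INF_eq_INF_SUP_inf_below) blast+
  then show ?thesis by (simp add: gval_def Fw_def g_def inf_below_def)
qed

end
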